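(* Let $p:\mathbb{R}\times\mathbb{R}\to\mathbb{R}$ be measurable with: (1) $p_{\alpha,\beta}>0$ almost everywhere; (2) $p_{\alpha,\beta}=p_{\beta,\alpha}$; (3) $p_{\alpha,\beta}$ is $\pi$-periodic in both arguments; (4) $p$ is essentially bounded. Let $\gamma\in B^\infty_{\rm ap}(\mathbb{R},\mathbb{R}^2)$ be a maximizer of $\omega_p$ over $B^\infty_{\rm ap}(\mathbb{R},\mathbb{R}^2)$, and set $\mu(\alpha)=\int_\alpha^{\alpha+\pi}p_{\alpha,\beta}\gamma(\beta)\,d\beta$. Then $\mu\in L^\infty_{\rm ap}(\mathbb{R},\mathbb{R}^2)$, and for almost every $\alpha$ the vector $\mu(\alpha)$ is orthogonal to $\gamma(\alpha)$ and $\gamma(\alpha)\times\mu(\alpha)\ge0$.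
   Context: For $v,w\in\mathbb{R}^2$, $v\times w=v_1w_2-v_2w_1$. $L^\infty_{\rm ap}(\mathbb{R},\mathbb{R}^2)$ is the space of essentially bounded measurable $\gamma:\mathbb{R}\to\mathbb{R}^2$ with $\gamma(\alpha+\pi)=-\gamma(\alpha)$. $B^\infty_{\rm ap}(\mathbb{R},\mathbb{R}^2)$ is its subset with $\|\gamma_1^2+\gamma_2^2\|_\infty\le1$. For such $\gamma$, \[ \omega_p(\gamma)=\int_0^\pi\int_\alpha^\pi p_{\alpha,\beta}\,\gamma(\alpha)\times\gamma(\beta)\,d\beta\,d\alpha. \] *)

theory Defs
  imports "HOL-Analysis.Analysis"
begin

definition cross2 :: "real \<times> real \<Rightarrow> real \<times> real \<Rightarrow> real" where
  "cross2 v w = fst v * snd w - snd v * fst w"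

text \<open>L-infinity antiperiodic functions (Borel representatives; conditions a.e.).\<close>
definition Linf_ap :: "(real \<Rightarrow> real \<times> real) \<Rightarrow> bool" where
  "Linf_ap g \<longleftrightarrow> g \<in> borel_measurable borel
     \<and> (\<exists>C. AE x in lborel. norm (g x) \<le> C)
     \<and> (AE a in lborel. g (a + pi) = - g a)"

definition Binf_ap :: "(real \<Rightarrow> real \<times> real) \<Rightarrow> bool" where
  "Binf_ap g \<longleftrightarrow> Linf_ap g \<and> (AE x in lborel. (fst (g x))\<^sup>2 + (snd (g x))\<^sup>2 \<le> 1)"

definition omega_p :: "(real \<times> real \<Rightarrow> real) \<Rightarrow> (real \<Rightarrow> real \<times> real) \<Rightarrow> real" where
  "omega_p p g = (LBINT a=0..pi. (LBINT b=a..pi. p (a, b) * cross2 (g a) (g b)))"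

end

theory Submission
  imports Defs
begin

(* Write Q(g,h) for the integral of p(a,b) g(a) x h(b) over 0 <= a <= b <= pi, so that
   omega_p(g) = Q(g,g). Exchanging the order of integration and using the symmetry and
   pi-periodicity of p together with the antiperiodicity of g turns Q(g,h) + Q(h,g) into the
   integral of h(a) x mu_g(a) over [0, pi]; hence
     omega_p(g + h) = omega_p(g) + omega_p(h) + int_0^pi h x mu_g.
   At a maximiser gamma, with mu = mu_gamma, J the quarter turn, sigma = [gamma x mu < 0] and
   theta = - sgn(gamma . mu), the fields (1 - t^2 - t sigma) gamma + t theta J gamma stay in the
   unit ball for 0 < t <= 1/2, and the expansion gives
     t * int_0^pi (|gamma . mu| - sigma gamma x mu) = O(t^2).
   The integrand is nonnegative, so it vanishes a.e. on [0, pi]; antiperiodicity of gamma and mu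
   extends this to the whole line. *)

lemma AE_lborel_shift:
  fixes P :: "real \<Rightarrow> bool"
  assumes "Measurable.pred borel P" "AE x in lborel. P x"
  shows "AE x in lborel. P (x + t)"
  using AE_borel_affine[of 1 P t] assms by (simp add: add.commute)

lemma lborel_integral_shift:
  fixes f :: "real \<Rightarrow> 'a::{banach, second_countable_topology}"
  shows "(\<integral>x. f x \<partial>lborel) = (\<integral>x. f (x + t) \<partial>lborel)"
  using lborel_integral_real_affine[of 1 f t] by (simp add: add.commute)

lemma AE_periodic_extend:
  fixes P :: "real \<Rightarrow> bool" and T :: real
  assumes [measurable]: "Measurable.pred borel P" and "0 < T"
    and base: "AE a in lborel. a \<in> {0..T} \<longrightarrow> P a"
    and per: "AE a in lborel. P (a + T) = P a"
  shows "AE a in lborel. P a"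
proof -
  have "AE a in lborel. \<forall>n::int. P (a + of_int n * T + T) = P (a + of_int n * T)"
    using AE_lborel_shift[OF _ per] by (subst AE_all_countable) (simp add: add.assoc)
  moreover have "AE a in lborel. \<forall>n::int. a + of_int n * T \<in> {0..T} \<longrightarrow> P (a + of_int n * T)"
    using AE_lborel_shift[OF _ base] by (subst AE_all_countable) simp
  ultimately show ?thesis
  proof eventually_elim
    case (elim a)
    have periodic: "P (a + of_int n * T) = P a" for n :: int
    proof (induction n rule: int_induct[where k=0])
      case (step1 i)
      then show ?case using elim(1)[rule_format, of i] by (simp add: algebra_simps)
    next
      case (step2 i)
      then show ?case using elim(1)[rule_format, of "i - 1"] by (simp add: algebra_simps)
    qed simp
    define n where "n = - \<lfloor>a / T\<rfloor>"
    have "a + of_int n * T \<in> {0..T}"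
      using floor_divide_lower[OF \<open>0 < T\<close>, of a] floor_divide_upper[OF \<open>0 < T\<close>, of a]
      by (simp add: n_def algebra_simps)
    then show "P a" using elim(2) periodic by blast
  qed
qed

lemma integrable_indicator_ess_bounded:
  fixes f :: "'a::euclidean_space \<Rightarrow> 'b::{banach, second_countable_topology}"
  assumes "f \<in> borel_measurable borel" "AE x in lborel. norm (f x) \<le> B"
    and "bounded A" "A \<in> sets borel"
  shows "integrable lborel (\<lambda>x. indicator A x *\<^sub>R f x)"
proof (rule Bochner_Integration.integrable_bound[where f="\<lambda>x. indicator A x * \<bar>B\<bar>"])
  show "integrable lborel (\<lambda>x. indicator A x * \<bar>B\<bar>)"
    using assms by (auto intro!: emeasure_bounded_finite integrable_mult_left)
  show "AE x in lborel. norm (indicator A x *\<^sub>R f x) \<le> norm (indicator A x * \<bar>B\<bar>)"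
    using assms(2) by eventually_elim (auto split: split_indicator)
qed (use assms in measurable)

lemma AE_pair_fst:
  assumes "Measurable.pred lborel P" "AE x in lborel. P x"
  shows "AE z in lborel \<Otimes>\<^sub>M lborel. P (fst z)"
proof (rule lborel_pair.AE_pair_measure)
  have [measurable]: "Measurable.pred lborel P" by fact
  show "{z \<in> space (lborel \<Otimes>\<^sub>M lborel). P (fst z)} \<in> sets (lborel \<Otimes>\<^sub>M lborel)"
    by measurable
qed (use assms in auto)

lemma AE_pair_snd:
  assumes "Measurable.pred lborel P" "AE x in lborel. P x"
  shows "AE z in lborel \<Otimes>\<^sub>M lborel. P (snd z)"
proof (rule lborel_pair.AE_pair_measure)
  have [measurable]: "Measurable.pred lborel P" by fact
  show "{z \<in> space (lborel \<Otimes>\<^sub>M lborel). P (snd z)} \<in> sets (lborel \<Otimes>\<^sub>M lborel)"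
    by measurable
qed (use assms in auto)

lemma borel_measurable_indicator_between[measurable]:
  fixes l u :: "real \<Rightarrow> real"
  assumes [measurable]: "l \<in> borel_measurable borel" "u \<in> borel_measurable borel"
  shows "(\<lambda>z. indicator {l (fst z)..u (fst z)} (snd z) :: real) \<in> borel_measurable (lborel \<Otimes>\<^sub>M lborel)"
proof -
  have "(\<lambda>z. indicator {l (fst z)..u (fst z)} (snd z) :: real)
      = (\<lambda>z. if l (fst z) \<le> snd z \<and> snd z \<le> u (fst z) then 1 else 0)"
    by (auto simp: indicator_def)
  then show ?thesis by simp
qed

lemma nonpos_if_le_linear:
  fixes A M c :: real
  assumes "0 < c" and le: "\<And>t. 0 < t \<Longrightarrow> t \<le> c \<Longrightarrow> A \<le> t * M"
  shows "A \<le> 0"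
proof (rule ccontr)
  assume "\<not> A \<le> 0"
  define t where "t = min c (A / (\<bar>M\<bar> + 1))"
  have "0 < t" using \<open>\<not> A \<le> 0\<close> \<open>0 < c\<close> by (simp add: t_def)
  have "t * M < t * (\<bar>M\<bar> + 1)" using \<open>0 < t\<close> by (intro mult_strict_left_mono) auto
  also have "\<dots> \<le> A"
    using min.cobounded2[of c "A / (\<bar>M\<bar> + 1)"] pos_le_divide_eq[of "\<bar>M\<bar> + 1" t A]
    by (simp add: t_def)
  finally show False using le[OF \<open>0 < t\<close>] by (simp add: t_def)
qed

section \<open>The planar cross product and the quarter turn\<close>

lemma cross2_bound: "\<bar>cross2 v w\<bar> \<le> norm v * norm w"
proof -
  obtain a b c d where v: "v = (a, b)" and w: "w = (c, d)" by (cases v, cases w)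
  have "(a*d - b*c)\<^sup>2 \<le> (a\<^sup>2 + b\<^sup>2) * (c\<^sup>2 + d\<^sup>2)"
    using sum_squares_ge_zero[of "a*c + b*d" 0] by (simp add: algebra_simps power2_eq_square)
  then have "sqrt ((a*d - b*c)\<^sup>2) \<le> sqrt ((a\<^sup>2 + b\<^sup>2) * (c\<^sup>2 + d\<^sup>2))" by (rule real_sqrt_le_mono)
  then show ?thesis by (simp add: v w cross2_def norm_Pair real_sqrt_mult)
qed

lemma cross2_add_left: "cross2 (u + v) w = cross2 u w + cross2 v w"
  and cross2_diff_left: "cross2 (u - v) w = cross2 u w - cross2 v w"
  and cross2_add_right: "cross2 u (v + w) = cross2 u v + cross2 u w"
  and cross2_scaleR_left: "cross2 (r *\<^sub>R v) w = r * cross2 v w"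
  and cross2_scaleR_right: "cross2 v (r *\<^sub>R w) = r * cross2 v w"
  and cross2_minus_left: "cross2 (- v) w = - cross2 v w"
  and cross2_minus_right: "cross2 v (- w) = - cross2 v w"
  and cross2_commute: "cross2 v w = - cross2 w v"
  by (auto simp: cross2_def algebra_simps)

lemma bounded_linear_cross2: "bounded_linear (cross2 v)"
proof (rule bounded_linear_intro[where K="norm v"])
  show "norm (cross2 v w) \<le> norm w * norm v" for w
    using cross2_bound[of v w] by (simp add: mult.commute)
qed (simp_all add: cross2_add_right cross2_scaleR_right)

lemma borel_measurable_cross2[measurable]:
  assumes "f \<in> borel_measurable M" "g \<in> borel_measurable M"
  shows "(\<lambda>x. cross2 (f x) (g x)) \<in> borel_measurable M"
proof -
  have [measurable]: "f \<in> M \<rightarrow>\<^sub>M borel \<Otimes>\<^sub>M borel" "g \<in> M \<rightarrow>\<^sub>M borel \<Otimes>\<^sub>M borel"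
    using assms by (simp_all add: borel_prod)
  show ?thesis unfolding cross2_def by measurable
qed

definition rot90 :: "real \<times> real \<Rightarrow> real \<times> real" where
  "rot90 v = (- snd v, fst v)"

lemma borel_measurable_rot90[measurable]:
  assumes "f \<in> borel_measurable M"
  shows "(\<lambda>x. rot90 (f x)) \<in> borel_measurable M"
proof -
  have [measurable]: "f \<in> M \<rightarrow>\<^sub>M borel \<Otimes>\<^sub>M borel" using assms by (simp add: borel_prod)
  have "(\<lambda>x. rot90 (f x)) \<in> M \<rightarrow>\<^sub>M borel \<Otimes>\<^sub>M borel" unfolding rot90_def by measurable
  then show ?thesis by (simp add: borel_prod)
qed

lemma cross2_rot90_left: "cross2 (rot90 v) w = - (v \<bullet> w)"
  by (cases v, cases w) (simp add: rot90_def cross2_def inner_Pair)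

lemma norm_rot90: "norm (rot90 v) = norm v"
  by (cases v) (simp add: rot90_def norm_Pair add.commute)

lemma rot90_minus: "rot90 (- v) = - rot90 v"
  by (simp add: rot90_def)

lemma norm_le_1_iff_sum_squares: "norm (v :: real \<times> real) \<le> 1 \<longleftrightarrow> (fst v)\<^sup>2 + (snd v)\<^sup>2 \<le> 1"
  by (cases v) (simp add: norm_Pair real_norm_def)

lemma norm_scaleR_add_rot90: "norm (a *\<^sub>R v + b *\<^sub>R rot90 v) = sqrt (a\<^sup>2 + b\<^sup>2) * norm v"
  by (cases v) (simp add: rot90_def norm_Pair real_sqrt_mult[symmetric] algebra_simps power2_eq_square)

lemma perturbation_coeffs_le_1:
  fixes t \<sigma> \<theta> :: real
  assumes "0 < t" "t \<le> 1/2" "\<sigma> = 0 \<or> \<sigma> = 1" "\<bar>\<theta>\<bar> \<le> 1"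
  shows "(1 - t\<^sup>2 - t * \<sigma>)\<^sup>2 + (t * \<theta>)\<^sup>2 \<le> 1"
proof -
  have "(t * \<theta>)\<^sup>2 \<le> t\<^sup>2"
    using assms(4) abs_square_le_1[of \<theta>] by (simp add: power_mult_distrib mult_left_le)
  moreover have "(1 - t\<^sup>2 - t * \<sigma>)\<^sup>2 + t\<^sup>2 \<le> 1"
    using assms(3)
  proof
    assume "\<sigma> = 0"
    have "t\<^sup>2 * t\<^sup>2 \<le> t\<^sup>2"
      using assms(1,2) by (intro mult_left_le) (auto simp: power_le_one)
    then show ?thesis using \<open>\<sigma> = 0\<close> by (simp add: power2_eq_square algebra_simps)
  next
    assume "\<sigma> = 1"
    have "t * t \<le> 1/2 * (1/2)" "t * t * t \<le> 1/2 * (1/2) * (1/2)"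
      using assms(1,2) by (intro mult_mono; simp)+
    then have "0 \<le> t * (2 - 2 * (t * t) - t * t * t)"
      using assms(1) by (intro mult_nonneg_nonneg) auto
    then show ?thesis using \<open>\<sigma> = 1\<close> by (simp add: power2_eq_square algebra_simps)
  qed
  ultimately show ?thesis by linarith
qed

section \<open>Essentially bounded fields and admissible perturbations\<close>

definition ess_bounded :: "(real \<Rightarrow> real \<times> real) \<Rightarrow> real \<Rightarrow> bool" where
  "ess_bounded g B \<longleftrightarrow> g \<in> borel_measurable borel \<and> (AE x in lborel. norm (g x) \<le> B)"

lemma
  assumes "ess_bounded g B"
  shows ess_bounded_borel: "g \<in> borel_measurable borel"
    and ess_bounded_AE: "AE x in lborel. norm (g x) \<le> B"
  using assms by (simp_all add: ess_bounded_def)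

lemma ess_bounded_mono: "ess_bounded g B \<Longrightarrow> B \<le> B' \<Longrightarrow> ess_bounded g B'"
  unfolding ess_bounded_def by (auto elim!: eventually_mono)

lemma ess_bounded_add: "ess_bounded g B \<Longrightarrow> ess_bounded h B' \<Longrightarrow> ess_bounded (\<lambda>x. g x + h x) (B + B')"
  unfolding ess_bounded_def
  by (auto elim!: eventually_elim2 intro: norm_triangle_le add_mono)

lemma ess_bounded_uminus: "ess_bounded g B \<Longrightarrow> ess_bounded (\<lambda>x. - g x) B"
  unfolding ess_bounded_def by auto

lemma ess_bounded_scaleR: "ess_bounded g B \<Longrightarrow> ess_bounded (\<lambda>x. t *\<^sub>R g x) (\<bar>t\<bar> * B)"
  unfolding ess_bounded_def by (auto elim!: eventually_mono intro: mult_left_mono)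

lemma
  assumes "Binf_ap g"
  shows Binf_ap_ess_bounded: "ess_bounded g 1"
    and Binf_ap_borel: "g \<in> borel_measurable borel"
    and Binf_ap_antiperiodic: "AE a in lborel. g (a + pi) = - g a"
  using assms by (simp_all add: Binf_ap_def Linf_ap_def ess_bounded_def norm_le_1_iff_sum_squares)

lemma integrable_cross2_on_period:
  assumes "ess_bounded h B" "ess_bounded k B'"
  shows "integrable lborel (\<lambda>a. indicator {0..pi} a * cross2 (h a) (k a))"
proof -
  have "integrable lborel (\<lambda>a. indicator {0..pi} a *\<^sub>R cross2 (h a) (k a))"
  proof (rule integrable_indicator_ess_bounded)
    show "AE a in lborel. norm (cross2 (h a) (k a)) \<le> B * B'"
      using assms unfolding ess_bounded_def
      by (auto elim!: eventually_elim2 intro: order_trans[OF cross2_bound] mult_mono order_trans[OF norm_ge_zero])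
  qed (use assms in \<open>auto simp: ess_bounded_def\<close>)
  then show ?thesis by simp
qed

lemma abs_integral_cross2_on_period_le:
  assumes h: "ess_bounded h B" and [measurable]: "k \<in> borel_measurable borel"
    and k: "AE a in lborel. a \<in> {0..pi} \<longrightarrow> norm (k a) \<le> B'"
  shows "\<bar>\<integral>a. indicator {0..pi} a * cross2 (h a) (k a) \<partial>lborel\<bar> \<le> \<bar>B\<bar> * \<bar>B'\<bar> * pi"
proof -
  have [measurable]: "h \<in> borel_measurable borel" using h by (rule ess_bounded_borel)
  have "\<bar>\<integral>a. indicator {0..pi} a * cross2 (h a) (k a) \<partial>lborel\<bar>
      \<le> (\<integral>a. norm (indicator {0..pi} a * cross2 (h a) (k a)) \<partial>lborel)"
    using integral_norm_bound by (metis real_norm_def)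
  also have "\<dots> \<le> (\<integral>a. indicator {0..pi} a * (\<bar>B\<bar> * \<bar>B'\<bar>) \<partial>lborel)"
  proof (rule integral_mono_AE')
    show "integrable lborel (\<lambda>a. indicator {0..pi} a * (\<bar>B\<bar> * \<bar>B'\<bar>) :: real)"
      by (intro integrable_mult_left integrable_real_indicator) auto
    show "AE a in lborel. norm (indicator {0..pi} a * cross2 (h a) (k a)) \<le> indicator {0..pi} a * (\<bar>B\<bar> * \<bar>B'\<bar>)"
      using ess_bounded_AE[OF h] k
    proof eventually_elim
      case (elim a)
      have "a \<in> {0..pi} \<Longrightarrow> norm (h a) * norm (k a) \<le> \<bar>B\<bar> * \<bar>B'\<bar>"
        using elim by (intro mult_mono) auto
      then show ?case
        using cross2_bound[of "h a" "k a"] by (auto split: split_indicator)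
    qed
  qed simp
  also have "\<dots> = \<bar>B\<bar> * \<bar>B'\<bar> * pi" by simp
  finally show ?thesis .
qed

lemma ess_bounded_scaleR_add_rot90:
  assumes g: "ess_bounded g B"
    and [measurable]: "\<sigma> \<in> borel_measurable borel" "\<theta> \<in> borel_measurable borel"
    and \<sigma>: "\<And>a. \<bar>\<sigma> a\<bar> \<le> 1" and \<theta>: "\<And>a. \<bar>\<theta> a\<bar> \<le> 1"
  shows "ess_bounded (\<lambda>a. \<sigma> a *\<^sub>R g a + \<theta> a *\<^sub>R rot90 (g a)) (2 * B)"
proof -
  have [measurable]: "g \<in> borel_measurable borel" using g by (rule ess_bounded_borel)
  have "AE a in lborel. norm (g a) \<le> B" using g by (rule ess_bounded_AE)
  then have "AE a in lborel. norm (\<sigma> a *\<^sub>R g a + \<theta> a *\<^sub>R rot90 (g a)) \<le> 2 * B"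
  proof eventually_elim
    case (elim a)
    have "norm (\<sigma> a *\<^sub>R g a + \<theta> a *\<^sub>R rot90 (g a)) \<le> \<bar>\<sigma> a\<bar> * norm (g a) + \<bar>\<theta> a\<bar> * norm (g a)"
      by (rule order_trans[OF norm_triangle_ineq]) (simp add: norm_rot90)
    also have "\<dots> \<le> norm (g a) + norm (g a)"
      using \<sigma>[of a] \<theta>[of a] by (intro add_mono mult_left_le_one_le) auto
    finally show ?case using elim by simp
  qed
  then show ?thesis by (simp add: ess_bounded_def)
qed

lemma Binf_ap_perturbation:
  assumes g: "Binf_ap g"
    and [measurable]: "\<sigma> \<in> borel_measurable borel" "\<theta> \<in> borel_measurable borel"
    and \<sigma>: "\<And>a. \<sigma> a = 0 \<or> \<sigma> a = 1" and \<theta>: "\<And>a. \<bar>\<theta> a\<bar> \<le> 1"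
    and periodic: "AE a in lborel. \<sigma> (a + pi) = \<sigma> a \<and> \<theta> (a + pi) = \<theta> a"
    and t: "0 < t" "t \<le> 1/2"
  shows "Binf_ap (\<lambda>a. (1 - t\<^sup>2 - t * \<sigma> a) *\<^sub>R g a + (t * \<theta> a) *\<^sub>R rot90 (g a))"
proof -
  note [measurable] = Binf_ap_borel[OF g] and anti = Binf_ap_antiperiodic[OF g]
    and disc = ess_bounded_AE[OF Binf_ap_ess_bounded[OF g]]
  have "AE a in lborel. norm ((1 - t\<^sup>2 - t * \<sigma> a) *\<^sub>R g a + (t * \<theta> a) *\<^sub>R rot90 (g a)) \<le> 1"
    using disc
  proof eventually_elim
    case (elim a)
    have "sqrt ((1 - t\<^sup>2 - t * \<sigma> a)\<^sup>2 + (t * \<theta> a)\<^sup>2) \<le> 1"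
      using perturbation_coeffs_le_1[OF t \<sigma> \<theta>] by simp
    then show ?case
      unfolding norm_scaleR_add_rot90 using elim by (simp add: mult_le_one)
  qed
  moreover have "AE a in lborel. (1 - t\<^sup>2 - t * \<sigma> (a + pi)) *\<^sub>R g (a + pi) + (t * \<theta> (a + pi)) *\<^sub>R rot90 (g (a + pi))
      = - ((1 - t\<^sup>2 - t * \<sigma> a) *\<^sub>R g a + (t * \<theta> a) *\<^sub>R rot90 (g a))"
    using anti periodic by eventually_elim (simp add: rot90_minus)
  ultimately show ?thesis
    unfolding Binf_ap_def Linf_ap_def norm_le_1_iff_sum_squares[symmetric] by auto
qed

section \<open>The quadratic form of a periodic kernel\<close>

locale periodic_kernel =
  fixes p :: "real \<times> real \<Rightarrow> real" and C :: real
  assumes p_borel: "p \<in> borel_measurable borel"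
    and p_sym: "\<And>a b. p (a, b) = p (b, a)"
    and p_periodic: "\<And>a b. p (a + pi, b) = p (a, b) \<and> p (a, b + pi) = p (a, b)"
    and p_bounded: "AE z in lborel. \<bar>p z\<bar> \<le> C"
begin

lemma p_borel_pair[measurable]: "p \<in> borel_measurable (lborel \<Otimes>\<^sub>M lborel)"
  using p_borel by (simp add: lborel_prod)

lemma AE_p_bounded_pair: "AE z in lborel \<Otimes>\<^sub>M lborel. \<bar>p z\<bar> \<le> C"
  by (subst lborel_prod) (rule p_bounded)

lemma AE_p_bounded_slices: "AE a in lborel. AE b in lborel. \<bar>p (a, b)\<bar> \<le> C"
  using lborel_pair.AE_pair[OF AE_p_bounded_pair] by simp

definition kernel_transform :: "(real \<Rightarrow> real) \<Rightarrow> (real \<Rightarrow> real) \<Rightarrow> (real \<Rightarrow> real \<times> real) \<Rightarrow> real \<Rightarrow> real \<times> real" where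
  "kernel_transform l u k a = (\<integral>b. (indicator {l a..u a} b * p (a, b)) *\<^sub>R k b \<partial>lborel)"

definition kernel_integrand ::
    "(real \<Rightarrow> real) \<Rightarrow> (real \<Rightarrow> real) \<Rightarrow> (real \<Rightarrow> real \<times> real) \<Rightarrow> (real \<Rightarrow> real \<times> real) \<Rightarrow> real \<times> real \<Rightarrow> real" where
  "kernel_integrand l u h k z =
     indicator {0..pi} (fst z) * indicator {l (fst z)..u (fst z)} (snd z) * p z * cross2 (h (fst z)) (k (snd z))"

lemma integrable_kernel_slice:
  assumes k: "ess_bounded k B" and pa: "AE b in lborel. \<bar>p (a, b)\<bar> \<le> C"
  shows "integrable lborel (\<lambda>b. (indicator {x..y} b * p (a, b)) *\<^sub>R k b)"
proof -
  have [measurable]: "k \<in> borel_measurable borel" using k by (rule ess_bounded_borel)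
  have "integrable lborel (\<lambda>b. indicator {x..y} b *\<^sub>R (p (a, b) *\<^sub>R k b))"
  proof (rule integrable_indicator_ess_bounded[where B="C * B"])
    have "AE b in lborel. norm (k b) \<le> B" using k by (rule ess_bounded_AE)
    with pa show "AE b in lborel. norm (p (a, b) *\<^sub>R k b) \<le> C * B"
      by eventually_elim (auto intro!: mult_mono)
  qed auto
  then show ?thesis by simp
qed

lemma integrable_kernel_integrand:
  assumes h: "ess_bounded h B" and k: "ess_bounded k B'"
    and [measurable]: "l \<in> borel_measurable borel" "u \<in> borel_measurable borel"
    and lu: "\<And>a. a \<in> {0..pi} \<Longrightarrow> 0 \<le> l a \<and> u a \<le> pi"
  shows "integrable (lborel \<Otimes>\<^sub>M lborel) (kernel_integrand l u h k)"
proof -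
  have [measurable]: "h \<in> borel_measurable lborel" "k \<in> borel_measurable lborel"
    using ess_bounded_borel[OF h] ess_bounded_borel[OF k] by simp_all
  have "AE z in lborel \<Otimes>\<^sub>M lborel. norm (h (fst z)) \<le> B"
    using ess_bounded_AE[OF h] by (intro AE_pair_fst) auto
  moreover have "AE z in lborel \<Otimes>\<^sub>M lborel. norm (k (snd z)) \<le> B'"
    using ess_bounded_AE[OF k] by (intro AE_pair_snd) auto
  ultimately have bound: "AE z in lborel \<Otimes>\<^sub>M lborel. norm (kernel_integrand l u h k z) \<le> C * (B * B')"
    using AE_p_bounded_pair
  proof eventually_elim
    case (elim z)
    then have "0 \<le> B" "0 \<le> B'" by (meson norm_ge_zero order_trans)+
    have "norm (kernel_integrand l u h k z) \<le> \<bar>p z\<bar> * (norm (h (fst z)) * norm (k (snd z)))"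
      using cross2_bound[of "h (fst z)" "k (snd z)"]
      by (auto simp: kernel_integrand_def abs_mult split: split_indicator intro!: mult_left_mono)
    also have "\<dots> \<le> C * (B * B')"
      using elim \<open>0 \<le> B\<close> \<open>0 \<le> B'\<close> by (auto intro!: mult_mono)
    finally show ?case .
  qed
  have "integrable lborel (\<lambda>z. indicator ({0..pi} \<times> {0..pi}) z *\<^sub>R kernel_integrand l u h k z)"
  proof (rule integrable_indicator_ess_bounded)
    show "AE z in lborel. norm (kernel_integrand l u h k z) \<le> C * (B * B')"
      using bound unfolding lborel_prod .
    have "kernel_integrand l u h k \<in> borel_measurable (lborel \<Otimes>\<^sub>M lborel)"
      unfolding kernel_integrand_def by measurable
    then show "kernel_integrand l u h k \<in> borel_measurable borel"
      by (metis lborel_prod measurable_lborel2)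
  qed (auto intro!: bounded_Times borel_closed closed_Times)
  moreover have "(\<lambda>z. indicator ({0..pi} \<times> {0..pi}) z *\<^sub>R kernel_integrand l u h k z) = kernel_integrand l u h k"
    using lu by (force simp: kernel_integrand_def fun_eq_iff split: split_indicator)
  ultimately show ?thesis by (simp add: lborel_prod)
qed

lemma borel_measurable_kernel_transform[measurable]:
  assumes [measurable]: "l \<in> borel_measurable borel" "u \<in> borel_measurable borel" "k \<in> borel_measurable borel"
  shows "kernel_transform l u k \<in> borel_measurable borel"
proof -
  have "(\<lambda>a. \<integral>b. (indicator {l a..u a} b * p (a, b)) *\<^sub>R k b \<partial>lborel) \<in> borel_measurable lborel"
    by (intro lborel.borel_measurable_lebesgue_integral) (simp add: split_beta')
  then show ?thesis by (simp add: kernel_transform_def[abs_def])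
qed

lemma kernel_integral_iterated:
  assumes h: "ess_bounded h B" and k: "ess_bounded k B'"
    and [measurable]: "l \<in> borel_measurable borel" "u \<in> borel_measurable borel"
    and lu: "\<And>a. a \<in> {0..pi} \<Longrightarrow> 0 \<le> l a \<and> u a \<le> pi"
  shows "integral\<^sup>L (lborel \<Otimes>\<^sub>M lborel) (kernel_integrand l u h k)
      = (\<integral>a. indicator {0..pi} a * cross2 (h a) (kernel_transform l u k a) \<partial>lborel)"
    and "integrable lborel (\<lambda>a. indicator {0..pi} a * cross2 (h a) (kernel_transform l u k a))"
proof -
  have [measurable]: "h \<in> borel_measurable borel" "k \<in> borel_measurable borel"
    using ess_bounded_borel[OF h] ess_bounded_borel[OF k] by simp_all
  have int: "integrable (lborel \<Otimes>\<^sub>M lborel) (kernel_integrand l u h k)"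
    using integrable_kernel_integrand[OF h k] lu by simp
  have inner_measurable: "(\<lambda>a. \<integral>b. kernel_integrand l u h k (a, b) \<partial>lborel) \<in> borel_measurable lborel"
    by (intro lborel.borel_measurable_lebesgue_integral) (simp add: kernel_integrand_def split_beta')
  have slices: "AE a in lborel. (\<integral>b. kernel_integrand l u h k (a, b) \<partial>lborel)
      = indicator {0..pi} a * cross2 (h a) (kernel_transform l u k a)"
    using AE_p_bounded_slices
  proof eventually_elim
    case (elim a)
    have "(\<integral>b. kernel_integrand l u h k (a, b) \<partial>lborel)
        = (\<integral>b. indicator {0..pi} a * cross2 (h a) ((indicator {l a..u a} b * p (a, b)) *\<^sub>R k b) \<partial>lborel)"
      by (simp add: kernel_integrand_def cross2_scaleR_right mult_ac)
    also have "\<dots> = indicator {0..pi} a * (\<integral>b. cross2 (h a) ((indicator {l a..u a} b * p (a, b)) *\<^sub>R k b) \<partial>lborel)"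
      by (rule integral_mult_right_zero)
    also have "\<dots> = indicator {0..pi} a * cross2 (h a) (kernel_transform l u k a)"
      unfolding kernel_transform_def
      by (simp add: integral_bounded_linear[OF bounded_linear_cross2 integrable_kernel_slice[OF k elim]])
    finally show ?case .
  qed
  show "integral\<^sup>L (lborel \<Otimes>\<^sub>M lborel) (kernel_integrand l u h k)
      = (\<integral>a. indicator {0..pi} a * cross2 (h a) (kernel_transform l u k a) \<partial>lborel)"
    using lborel_pair.integral_fst'[OF int] integral_cong_AE[OF inner_measurable _ slices] by simp
  show "integrable lborel (\<lambda>a. indicator {0..pi} a * cross2 (h a) (kernel_transform l u k a))"
    using lborel_pair.integrable_fst'[OF int]
    by (rule integrable_cong_AE_imp) (use slices in auto)
qed

(* Q(g,h) in the notation of the header. *)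
definition omega_form :: "(real \<Rightarrow> real \<times> real) \<Rightarrow> (real \<Rightarrow> real \<times> real) \<Rightarrow> real" where
  "omega_form g h = integral\<^sup>L (lborel \<Otimes>\<^sub>M lborel) (kernel_integrand (\<lambda>a. a) (\<lambda>_. pi) g h)"

definition mu :: "(real \<Rightarrow> real \<times> real) \<Rightarrow> real \<Rightarrow> real \<times> real" where
  "mu g a = (LBINT b=a..a+pi. p (a, b) *\<^sub>R g b)"

lemma mu_eq_kernel_transform: "mu g a = kernel_transform (\<lambda>a. a) (\<lambda>a. a + pi) g a"
  by (simp add: mu_def kernel_transform_def interval_integral_Icc set_lebesgue_integral_def)

lemma integrable_omega_integrand:
  "ess_bounded g B \<Longrightarrow> ess_bounded h B' \<Longrightarrow> integrable (lborel \<Otimes>\<^sub>M lborel) (kernel_integrand (\<lambda>a. a) (\<lambda>_. pi) g h)"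
  by (rule integrable_kernel_integrand) auto

lemma omega_p_eq_omega_form:
  assumes g: "ess_bounded g B"
  shows "omega_p p g = omega_form g g"
proof -
  have "omega_p p g = (\<integral>a. indicator {0..pi} a * (LBINT b=a..pi. p (a, b) * cross2 (g a) (g b)) \<partial>lborel)"
    by (simp add: omega_p_def zero_ereal_def interval_integral_Icc set_lebesgue_integral_def)
  also have "\<dots> = (\<integral>a. \<integral>b. kernel_integrand (\<lambda>a. a) (\<lambda>_. pi) g g (a, b) \<partial>lborel \<partial>lborel)"
    by (intro Bochner_Integration.integral_cong refl)
       (auto simp: kernel_integrand_def interval_integral_Icc set_lebesgue_integral_def mult_ac split: split_indicator)
  also have "\<dots> = omega_form g g"
    unfolding omega_form_def by (rule lborel_pair.integral_fst'[OF integrable_omega_integrand[OF g g]])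
  finally show ?thesis .
qed

lemma omega_form_add:
  assumes g: "ess_bounded g B" and h: "ess_bounded h B'"
  shows "omega_form (\<lambda>x. g x + h x) (\<lambda>x. g x + h x)
    = omega_form g g + omega_form g h + omega_form h g + omega_form h h"
proof -
  let ?K = "kernel_integrand (\<lambda>a. a) (\<lambda>_. pi)"
  have "?K (\<lambda>x. g x + h x) (\<lambda>x. g x + h x) = (\<lambda>z. ?K g g z + ?K g h z + ?K h g z + ?K h h z)"
    by (simp add: fun_eq_iff kernel_integrand_def cross2_add_left cross2_add_right algebra_simps)
  then show ?thesis
    using integrable_omega_integrand[OF g g] integrable_omega_integrand[OF g h]
      integrable_omega_integrand[OF h g] integrable_omega_integrand[OF h h]
    by (simp add: omega_form_def)
qed

lemma omega_form_swap:
  assumes g: "ess_bounded g B" and h: "ess_bounded h B'"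
  shows "omega_form g h = integral\<^sup>L (lborel \<Otimes>\<^sub>M lborel) (kernel_integrand (\<lambda>_. 0) (\<lambda>a. a) h (\<lambda>b. - g b))"
proof -
  have "kernel_integrand (\<lambda>a. a) (\<lambda>_. pi) g h \<in> borel_measurable (lborel \<Otimes>\<^sub>M lborel)"
    using integrable_omega_integrand[OF g h] by (rule borel_measurable_integrable)
  then have "omega_form g h = (\<integral>(a, b). kernel_integrand (\<lambda>a. a) (\<lambda>_. pi) g h (b, a) \<partial>(lborel \<Otimes>\<^sub>M lborel))"
    unfolding omega_form_def by (rule lborel_pair.integral_product_swap[symmetric])
  also have "\<dots> = integral\<^sup>L (lborel \<Otimes>\<^sub>M lborel) (kernel_integrand (\<lambda>_. 0) (\<lambda>a. a) h (\<lambda>b. - g b))"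
  proof (intro Bochner_Integration.integral_cong refl)
    fix z :: "real \<times> real"
    obtain a b where z: "z = (a, b)" by (cases z)
    show "(case z of (a, b) \<Rightarrow> kernel_integrand (\<lambda>a. a) (\<lambda>_. pi) g h (b, a))
        = kernel_integrand (\<lambda>_. 0) (\<lambda>a. a) h (\<lambda>b. - g b) z"
      using p_sym[of a b] cross2_commute[of "g b" "h a"]
      by (auto simp: z kernel_integrand_def cross2_minus_right split: split_indicator)
  qed
  finally show ?thesis .
qed

lemma borel_measurable_mu[measurable]:
  "g \<in> borel_measurable borel \<Longrightarrow> mu g \<in> borel_measurable borel"
  unfolding mu_eq_kernel_transform[abs_def] by measurable

lemma kernel_transform_reflect:
  assumes [measurable]: "g \<in> borel_measurable borel" and anti: "AE x in lborel. g (x + pi) = - g x"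
  shows "kernel_transform (\<lambda>_. 0) (\<lambda>a. a) (\<lambda>b. - g b) a = kernel_transform (\<lambda>_. pi) (\<lambda>a. a + pi) g a"
proof -
  have "kernel_transform (\<lambda>_. pi) (\<lambda>a. a + pi) g a
      = (\<integral>x. (indicator {pi..a + pi} (x + pi) * p (a, x + pi)) *\<^sub>R g (x + pi) \<partial>lborel)"
    unfolding kernel_transform_def by (rule lborel_integral_shift)
  also have "\<dots> = (\<integral>x. (indicator {0..a} x * p (a, x)) *\<^sub>R g (x + pi) \<partial>lborel)"
    by (intro Bochner_Integration.integral_cong refl) (auto simp: p_periodic indicator_def)
  also have "\<dots> = kernel_transform (\<lambda>_. 0) (\<lambda>a. a) (\<lambda>b. - g b) a"
    unfolding kernel_transform_def by (rule integral_cong_AE) (use anti in auto)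
  finally show ?thesis ..
qed

lemma kernel_transform_split:
  assumes g: "ess_bounded g B" and pa: "AE b in lborel. \<bar>p (a, b)\<bar> \<le> C" and a: "a \<in> {0..pi}"
  shows "kernel_transform (\<lambda>a. a) (\<lambda>_. pi) g a + kernel_transform (\<lambda>_. pi) (\<lambda>a. a + pi) g a
    = kernel_transform (\<lambda>a. a) (\<lambda>a. a + pi) g a"
proof -
  have [measurable]: "g \<in> borel_measurable borel" using g by (rule ess_bounded_borel)
  have "kernel_transform (\<lambda>a. a) (\<lambda>_. pi) g a + kernel_transform (\<lambda>_. pi) (\<lambda>a. a + pi) g a
      = (\<integral>b. (indicator {a..pi} b * p (a, b)) *\<^sub>R g b + (indicator {pi..a + pi} b * p (a, b)) *\<^sub>R g b \<partial>lborel)"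
    unfolding kernel_transform_def
    by (intro Bochner_Integration.integral_add[symmetric] integrable_kernel_slice[OF g pa])
  also have "\<dots> = kernel_transform (\<lambda>a. a) (\<lambda>a. a + pi) g a"
    unfolding kernel_transform_def
  proof (rule integral_cong_AE)
    show "AE b in lborel. (indicator {a..pi} b * p (a, b)) *\<^sub>R g b + (indicator {pi..a + pi} b * p (a, b)) *\<^sub>R g b
        = (indicator {a..a + pi} b * p (a, b)) *\<^sub>R g b"
      using AE_lborel_singleton[of pi]
      by eventually_elim (use a in \<open>auto simp: indicator_def scaleR_add_left[symmetric]\<close>)
  qed auto
  finally show ?thesis .
qed

lemma omega_form_cross_terms:
  assumes g: "ess_bounded g B" and h: "ess_bounded h B'" and anti: "AE x in lborel. g (x + pi) = - g x"
  shows "omega_form g h + omega_form h g = (\<integral>a. indicator {0..pi} a * cross2 (h a) (mu g a) \<partial>lborel)"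
proof -
  have [measurable]: "g \<in> borel_measurable borel" "h \<in> borel_measurable borel"
    using ess_bounded_borel[OF g] ess_bounded_borel[OF h] by simp_all
  let ?below = "\<lambda>a. indicator {0..pi} a * cross2 (h a) (kernel_transform (\<lambda>_. 0) (\<lambda>a. a) (\<lambda>b. - g b) a)"
  let ?above = "\<lambda>a. indicator {0..pi} a * cross2 (h a) (kernel_transform (\<lambda>a. a) (\<lambda>_. pi) g a)"
  have below: "integral\<^sup>L (lborel \<Otimes>\<^sub>M lborel) (kernel_integrand (\<lambda>_. 0) (\<lambda>a. a) h (\<lambda>b. - g b))
      = integral\<^sup>L lborel ?below" "integrable lborel ?below"
    by (rule kernel_integral_iterated[OF h ess_bounded_uminus[OF g]]; simp)+
  have above: "omega_form h g = integral\<^sup>L lborel ?above" "integrable lborel ?above"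
    unfolding omega_form_def by (rule kernel_integral_iterated[OF h g]; simp)+
  have "omega_form g h + omega_form h g = integral\<^sup>L lborel ?below + integral\<^sup>L lborel ?above"
    by (simp only: omega_form_swap[OF g h] below(1) above(1))
  also have "\<dots> = (\<integral>a. ?below a + ?above a \<partial>lborel)"
    by (rule Bochner_Integration.integral_add[symmetric, OF below(2) above(2)])
  also have "\<dots> = (\<integral>a. indicator {0..pi} a * cross2 (h a) (mu g a) \<partial>lborel)"
  proof (rule integral_cong_AE)
    show "AE a in lborel. ?below a + ?above a = indicator {0..pi} a * cross2 (h a) (mu g a)"
      using AE_p_bounded_slices
    proof eventually_elim
      case (elim a)
      show ?case
      proof (cases "a \<in> {0..pi}")
        case True
        have "mu g a = kernel_transform (\<lambda>_. 0) (\<lambda>a. a) (\<lambda>b. - g b) a + kernel_transform (\<lambda>a. a) (\<lambda>_. pi) g a"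
          using kernel_transform_split[OF g elim True] kernel_transform_reflect[OF _ anti]
          by (simp add: mu_eq_kernel_transform add.commute)
        then show ?thesis by (simp only: cross2_add_right distrib_left)
      qed simp
    qed
    show "(\<lambda>a. ?below a + ?above a) \<in> borel_measurable lborel"
      using Bochner_Integration.integrable_add[OF below(2) above(2)] by (rule borel_measurable_integrable)
  qed measurable
  finally show ?thesis .
qed

lemma omega_p_add:
  assumes g: "ess_bounded g B" and h: "ess_bounded h B'" and anti: "AE x in lborel. g (x + pi) = - g x"
  shows "omega_p p (\<lambda>x. g x + h x)
    = omega_p p g + omega_p p h + (\<integral>a. indicator {0..pi} a * cross2 (h a) (mu g a) \<partial>lborel)"
  unfolding omega_p_eq_omega_form[OF g] omega_p_eq_omega_form[OF h]
    omega_p_eq_omega_form[OF ess_bounded_add[OF g h]] omega_form_add[OF g h]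
    omega_form_cross_terms[OF g h anti, symmetric]
  by simp

lemma norm_kernel_transform_le:
  assumes k: "ess_bounded k B" and pa: "AE b in lborel. \<bar>p (a, b)\<bar> \<le> C" and lu: "l a \<le> u a"
  shows "norm (kernel_transform l u k a) \<le> \<bar>C\<bar> * \<bar>B\<bar> * (u a - l a)"
proof -
  have [measurable]: "k \<in> borel_measurable borel" using k by (rule ess_bounded_borel)
  have "norm (kernel_transform l u k a) \<le> (\<integral>b. norm ((indicator {l a..u a} b * p (a, b)) *\<^sub>R k b) \<partial>lborel)"
    unfolding kernel_transform_def by (rule integral_norm_bound)
  also have "\<dots> \<le> (\<integral>b. indicator {l a..u a} b * (\<bar>C\<bar> * \<bar>B\<bar>) \<partial>lborel)"
  proof (rule integral_mono_AE')
    show "integrable lborel (\<lambda>b. indicator {l a..u a} b * (\<bar>C\<bar> * \<bar>B\<bar>) :: real)"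
      using lu by (intro integrable_mult_left integrable_real_indicator) auto
    have "AE b in lborel. norm (k b) \<le> B" using k by (rule ess_bounded_AE)
    with pa show "AE b in lborel. norm ((indicator {l a..u a} b * p (a, b)) *\<^sub>R k b) \<le> indicator {l a..u a} b * (\<bar>C\<bar> * \<bar>B\<bar>)"
      by eventually_elim (auto simp: abs_mult split: split_indicator intro!: mult_mono)
  qed simp
  also have "\<dots> = \<bar>C\<bar> * \<bar>B\<bar> * (u a - l a)" using lu by simp
  finally show ?thesis .
qed

lemma mu_ess_bounded:
  assumes g: "ess_bounded g B"
  shows "ess_bounded (mu g) (\<bar>C\<bar> * \<bar>B\<bar> * pi)"
proof -
  have "AE a in lborel. norm (mu g a) \<le> \<bar>C\<bar> * \<bar>B\<bar> * pi"
    using AE_p_bounded_slices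
  proof eventually_elim
    case (elim a)
    show ?case
      using norm_kernel_transform_le[OF g elim, where l="\<lambda>a. a" and u="\<lambda>a. a + pi"]
      by (simp add: mu_eq_kernel_transform)
  qed
  then show ?thesis using ess_bounded_borel[OF g] by (simp add: ess_bounded_def)
qed

lemma mu_antiperiodic:
  assumes [measurable]: "g \<in> borel_measurable borel" and anti: "AE x in lborel. g (x + pi) = - g x"
  shows "mu g (a + pi) = - mu g a"
proof -
  have "mu g (a + pi) = (\<integral>x. (indicator {a + pi..a + pi + pi} (x + pi) * p (a + pi, x + pi)) *\<^sub>R g (x + pi) \<partial>lborel)"
    unfolding mu_eq_kernel_transform kernel_transform_def by (rule lborel_integral_shift)
  also have "\<dots> = (\<integral>x. (indicator {a..a + pi} x * p (a, x)) *\<^sub>R g (x + pi) \<partial>lborel)"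
    by (intro Bochner_Integration.integral_cong refl) (auto simp: p_periodic indicator_def)
  also have "\<dots> = (\<integral>x. - ((indicator {a..a + pi} x * p (a, x)) *\<^sub>R g x) \<partial>lborel)"
    by (rule integral_cong_AE) (use anti in auto)
  also have "\<dots> = - mu g a"
    unfolding mu_eq_kernel_transform kernel_transform_def by (rule integral_minus)
  finally show ?thesis .
qed

lemma Linf_ap_mu:
  assumes g: "ess_bounded g B" and anti: "AE x in lborel. g (x + pi) = - g x"
  shows "Linf_ap (mu g)"
  using mu_ess_bounded[OF g] mu_antiperiodic[OF ess_bounded_borel[OF g] anti]
  by (auto simp: Linf_ap_def ess_bounded_def)

lemma omega_form_bound:
  assumes h: "ess_bounded h B" and k: "ess_bounded k B'"
  shows "\<bar>omega_form h k\<bar> \<le> \<bar>C\<bar> * \<bar>B\<bar> * \<bar>B'\<bar> * pi\<^sup>2"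
proof -
  have [measurable]: "k \<in> borel_measurable borel" using k by (rule ess_bounded_borel)
  let ?N = "kernel_transform (\<lambda>a. a) (\<lambda>_. pi) k"
  have "AE a in lborel. a \<in> {0..pi} \<longrightarrow> norm (?N a) \<le> \<bar>C\<bar> * \<bar>B'\<bar> * pi"
    using AE_p_bounded_slices
  proof eventually_elim
    case (elim a)
    have "a \<in> {0..pi} \<Longrightarrow> norm (?N a) \<le> \<bar>C\<bar> * \<bar>B'\<bar> * (pi - a)"
      using norm_kernel_transform_le[OF k elim, where l="\<lambda>a. a" and u="\<lambda>_. pi"] by simp
    also have "a \<in> {0..pi} \<Longrightarrow> \<bar>C\<bar> * \<bar>B'\<bar> * (pi - a) \<le> \<bar>C\<bar> * \<bar>B'\<bar> * pi"
      by (simp add: mult_left_mono)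
    finally show ?case by blast
  qed
  then have "\<bar>\<integral>a. indicator {0..pi} a * cross2 (h a) (?N a) \<partial>lborel\<bar> \<le> \<bar>B\<bar> * \<bar>\<bar>C\<bar> * \<bar>B'\<bar> * pi\<bar> * pi"
    by (intro abs_integral_cross2_on_period_le[OF h]) auto
  moreover have "omega_form h k = (\<integral>a. indicator {0..pi} a * cross2 (h a) (?N a) \<partial>lborel)"
    unfolding omega_form_def by (rule kernel_integral_iterated[OF h k]) auto
  ultimately show ?thesis by (simp add: abs_mult power2_eq_square mult_ac)
qed

subsection \<open>First-order conditions at a maximiser\<close>

lemma maximizer_variation_bound:
  assumes g: "ess_bounded g B" and anti: "AE x in lborel. g (x + pi) = - g x"
    and max: "\<And>\<eta>. Binf_ap \<eta> \<Longrightarrow> omega_p p \<eta> \<le> omega_p p g"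
    and v: "ess_bounded v B'" and admissible: "Binf_ap (\<lambda>a. g a + v a)"
  shows "(\<integral>a. indicator {0..pi} a * cross2 (v a) (mu g a) \<partial>lborel) \<le> \<bar>C\<bar> * B'\<^sup>2 * pi\<^sup>2"
proof -
  have "omega_p p g + omega_p p v + (\<integral>a. indicator {0..pi} a * cross2 (v a) (mu g a) \<partial>lborel) \<le> omega_p p g"
    using max[OF admissible] by (simp add: omega_p_add[OF g v anti])
  moreover have "- omega_p p v \<le> \<bar>C\<bar> * \<bar>B'\<bar> * \<bar>B'\<bar> * pi\<^sup>2"
    using omega_form_bound[OF v v] by (simp add: omega_p_eq_omega_form[OF v])
  moreover have "\<bar>C\<bar> * \<bar>B'\<bar> * \<bar>B'\<bar> * pi\<^sup>2 = \<bar>C\<bar> * B'\<^sup>2 * pi\<^sup>2"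
    by (simp add: power2_eq_square)
  ultimately show ?thesis by linarith
qed

lemma maximizer_perturbation_bound:
  assumes g: "Binf_ap g" and max: "\<And>\<eta>. Binf_ap \<eta> \<Longrightarrow> omega_p p \<eta> \<le> omega_p p g"
    and [measurable]: "\<sigma> \<in> borel_measurable borel" "\<theta> \<in> borel_measurable borel"
    and \<sigma>: "\<And>a. \<sigma> a = 0 \<or> \<sigma> a = 1" and \<theta>: "\<And>a. \<bar>\<theta> a\<bar> \<le> 1"
    and periodic: "AE a in lborel. \<sigma> (a + pi) = \<sigma> a \<and> \<theta> (a + pi) = \<theta> a"
    and t: "0 < t" "t \<le> 1/2"
  defines "w \<equiv> \<lambda>a. (- \<sigma> a) *\<^sub>R g a + \<theta> a *\<^sub>R rot90 (g a)"
  shows "(\<integral>a. indicator {0..pi} a * cross2 (w a) (mu g a) \<partial>lborel)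
    \<le> t * (9 * \<bar>C\<bar> * pi\<^sup>2 + (\<integral>a. indicator {0..pi} a * cross2 (g a) (mu g a) \<partial>lborel))"
proof -
  have g1: "ess_bounded g 1" using g by (rule Binf_ap_ess_bounded)
  note [measurable] = Binf_ap_borel[OF g] and anti = Binf_ap_antiperiodic[OF g]
  have w2: "ess_bounded w (2 * 1)"
  proof -
    have "\<bar>- \<sigma> a\<bar> \<le> 1" for a using \<sigma>[of a] by auto
    then show ?thesis unfolding w_def by (intro ess_bounded_scaleR_add_rot90[OF g1 _ _ _ \<theta>]) auto
  qed
  \<comment> \<open>The correction by - t^2 g is what keeps g + v in the unit ball.\<close>
  define v where "v a = t *\<^sub>R w a + (- t\<^sup>2) *\<^sub>R g a" for a
  have "g a + v a = (1 - t\<^sup>2 - t * \<sigma> a) *\<^sub>R g a + (t * \<theta> a) *\<^sub>R rot90 (g a)" for a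
    by (simp add: v_def w_def algebra_simps)
  then have admissible: "Binf_ap (\<lambda>a. g a + v a)"
    using Binf_ap_perturbation[OF g _ _ \<sigma> \<theta> periodic t] by simp
  have "t\<^sup>2 \<le> t" using t by (simp add: power2_eq_square mult_left_le_one_le)
  then have v3: "ess_bounded v (3 * t)"
    unfolding v_def using t
    by (intro ess_bounded_mono[OF ess_bounded_add[OF ess_bounded_scaleR[OF w2] ess_bounded_scaleR[OF g1]]]) auto
  let ?I = "\<lambda>h. \<integral>a. indicator {0..pi} a * cross2 (h a) (mu g a) \<partial>lborel"
  have mu: "ess_bounded (mu g) (\<bar>C\<bar> * \<bar>1\<bar> * pi)" by (rule mu_ess_bounded[OF g1])
  have "(\<lambda>a. indicator {0..pi} a * cross2 (v a) (mu g a))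
      = (\<lambda>a. t * (indicator {0..pi} a * cross2 (w a) (mu g a)) - t\<^sup>2 * (indicator {0..pi} a * cross2 (g a) (mu g a)))"
    by (simp add: fun_eq_iff v_def cross2_diff_left cross2_scaleR_left algebra_simps)
  then have "?I v = t * ?I w - t\<^sup>2 * ?I g"
    using integrable_cross2_on_period[OF w2 mu] integrable_cross2_on_period[OF g1 mu] by simp
  moreover have "?I v \<le> \<bar>C\<bar> * (3 * t)\<^sup>2 * pi\<^sup>2"
    by (rule maximizer_variation_bound[OF g1 anti max v3 admissible])
  ultimately have "t * ?I w \<le> t * (t * (9 * \<bar>C\<bar> * pi\<^sup>2 + ?I g))"
    by (simp add: power2_eq_square algebra_simps)
  then show ?thesis using t by simp
qed

lemma maximizer_first_order_on_period:
  assumes g: "Binf_ap g" and max: "\<And>\<eta>. Binf_ap \<eta> \<Longrightarrow> omega_p p \<eta> \<le> omega_p p g"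
  shows "AE a in lborel. a \<in> {0..pi} \<longrightarrow> g a \<bullet> mu g a = 0 \<and> 0 \<le> cross2 (g a) (mu g a)"
proof -
  have g1: "ess_bounded g 1" using g by (rule Binf_ap_ess_bounded)
  note [measurable] = Binf_ap_borel[OF g] and anti = Binf_ap_antiperiodic[OF g]
  define \<sigma> where "\<sigma> a = (if cross2 (g a) (mu g a) < 0 then 1 else 0 :: real)" for a
  define \<theta> where "\<theta> a = - sgn (g a \<bullet> mu g a)" for a
  define F where "F a = indicator {0..pi} a * (\<bar>g a \<bullet> mu g a\<bar> - \<sigma> a * cross2 (g a) (mu g a))" for a
  have [measurable]: "\<sigma> \<in> borel_measurable borel" "\<theta> \<in> borel_measurable borel"
    unfolding \<sigma>_def[abs_def] \<theta>_def[abs_def] by measurable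
  have periodic: "AE a in lborel. \<sigma> (a + pi) = \<sigma> a \<and> \<theta> (a + pi) = \<theta> a"
    using anti by eventually_elim
      (simp add: \<sigma>_def \<theta>_def mu_antiperiodic[OF _ anti] cross2_def)
  have F_eq: "F = (\<lambda>a. indicator {0..pi} a * cross2 ((- \<sigma> a) *\<^sub>R g a + \<theta> a *\<^sub>R rot90 (g a)) (mu g a))"
    by (simp add: fun_eq_iff F_def \<theta>_def cross2_diff_left cross2_minus_left cross2_scaleR_left cross2_rot90_left abs_sgn)
  have F_nonneg: "0 \<le> F a" for a
    by (auto simp: F_def \<sigma>_def split: split_indicator)
  have "integral\<^sup>L lborel F \<le> 0"
  proof (rule nonpos_if_le_linear)
    show "integral\<^sup>L lborel F
        \<le> t * (9 * \<bar>C\<bar> * pi\<^sup>2 + (\<integral>a. indicator {0..pi} a * cross2 (g a) (mu g a) \<partial>lborel))"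
      if "0 < t" "t \<le> 1/2" for t
      unfolding F_eq
      by (rule maximizer_perturbation_bound[OF g max _ _ _ _ periodic that]) (auto simp: \<sigma>_def \<theta>_def sgn_real_def)
  qed simp
  moreover have "ess_bounded (\<lambda>a. (- \<sigma> a) *\<^sub>R g a + \<theta> a *\<^sub>R rot90 (g a)) (2 * 1)"
    by (rule ess_bounded_scaleR_add_rot90[OF g1]) (auto simp: \<sigma>_def \<theta>_def sgn_real_def)
  then have "integrable lborel F"
    unfolding F_eq by (rule integrable_cross2_on_period[OF _ mu_ess_bounded[OF g1]])
  ultimately have "AE a in lborel. F a = 0"
    using integral_nonneg_eq_0_iff_AE[of lborel F] F_nonneg by (simp add: order_antisym integral_nonneg)
  then show ?thesis
    by eventually_elim (auto simp: F_def \<sigma>_def split: if_splits)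
qed

lemma maximizer_first_order:
  assumes g: "Binf_ap g" and max: "\<And>\<eta>. Binf_ap \<eta> \<Longrightarrow> omega_p p \<eta> \<le> omega_p p g"
  shows "AE a in lborel. g a \<bullet> mu g a = 0 \<and> 0 \<le> cross2 (g a) (mu g a)"
proof (rule AE_periodic_extend[OF _ pi_gt_zero maximizer_first_order_on_period[OF g max]])
  note [measurable] = Binf_ap_borel[OF g] and anti = Binf_ap_antiperiodic[OF g]
  show "Measurable.pred borel (\<lambda>a. g a \<bullet> mu g a = 0 \<and> 0 \<le> cross2 (g a) (mu g a))"
    by measurable
  show "AE a in lborel. (g (a + pi) \<bullet> mu g (a + pi) = 0 \<and> 0 \<le> cross2 (g (a + pi)) (mu g (a + pi)))
      = (g a \<bullet> mu g a = 0 \<and> 0 \<le> cross2 (g a) (mu g a))"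
    using anti by eventually_elim (simp add: mu_antiperiodic[OF _ anti] cross2_minus_left cross2_minus_right)
qed

end

theorem lemma4p4:
  fixes p :: "real \<times> real \<Rightarrow> real" and \<gamma> :: "real \<Rightarrow> real \<times> real"
  assumes p_meas: "p \<in> borel_measurable borel"
    and p_pos: "AE x in lborel. p x > 0"
    and p_sym: "\<And>a b. p (a, b) = p (b, a)"
    and p_per: "\<And>a b. p (a + pi, b) = p (a, b) \<and> p (a, b + pi) = p (a, b)"
    and p_bdd: "\<exists>C. AE x in lborel. \<bar>p x\<bar> \<le> C"
    and \<gamma>_in: "Binf_ap \<gamma>"
    and \<gamma>_max: "\<And>\<eta>. Binf_ap \<eta> \<Longrightarrow> omega_p p \<eta> \<le> omega_p p \<gamma>"
  shows "Linf_ap (\<lambda>a. LBINT b=a..a+pi. p (a, b) *\<^sub>R \<gamma> b)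
    \<and> (AE a in lborel. \<gamma> a \<bullet> (LBINT b=a..a+pi. p (a, b) *\<^sub>R \<gamma> b) = 0
          \<and> cross2 (\<gamma> a) (LBINT b=a..a+pi. p (a, b) *\<^sub>R \<gamma> b) \<ge> 0)"
proof -
  obtain C where "AE x in lborel. \<bar>p x\<bar> \<le> C" using p_bdd by blast
  then interpret periodic_kernel p C
    using p_meas p_sym p_per by unfold_locales auto
  have "Linf_ap (mu \<gamma>)"
    using Linf_ap_mu[OF Binf_ap_ess_bounded Binf_ap_antiperiodic] \<gamma>_in by blast
  with maximizer_first_order[OF \<gamma>_in \<gamma>_max] show ?thesis
    by (simp add: mu_def[symmetric])
qed

end
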